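(* There exists $C>1$, depending only on $M$, such that for $l$ sufficiently large the following holds: if $E_j(\omega)$ is an eigenvalue of $H_\omega(\Lambda_l)$ with normalized eigenvector $\phi$, $u\in\mathbb{R}^l$ is defined by $u(i)=\phi(i)^2$, $j_0$ is an index with $u(j_0)=\max_ju(j)$, $\mathcal{J}=\{j_0-1,j_0,j_0+1\}$ and $\mathcal{K}=\{1,\dots,l\}\setminus\mathcal{J}$, then $\|u|_{\mathcal{K}}\|_1\in(1/C,1)$.
   Context: Let $(a_\omega(n))_{n\in\mathbb{Z}}$ be real numbers with $|a_\omega(n)|\in[1/M,M]$ for all $n$, for some $M>1$. $H_\omega(\Lambda_l)$ is the hopping operator $(H u)(n)=a_\omega(n+1)u(n+1)+a_\omega(n)u(n-1)$ restricted to $\ell^2(\{1,\dots,l\})$ with Dirichlet boundary conditions. $u|_{\mathcal{K}}$ is the restriction of $u$ to $\mathcal{K}$. *)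

theory Defs
  imports Complex_Main
begin

text \<open>The hopping operator restricted to ell^2({1,...,l}) with Dirichlet boundary
  conditions: vectors are functions int => real, only their values on {1..l} are used
  (values outside are treated as 0).\<close>
definition hop_dirichlet :: "(int \<Rightarrow> real) \<Rightarrow> nat \<Rightarrow> (int \<Rightarrow> real) \<Rightarrow> int \<Rightarrow> real" where
  "hop_dirichlet a l u n =
     (if n + 1 \<le> int l then a (n + 1) * u (n + 1) else 0) +
     (if 1 \<le> n - 1 then a n * u (n - 1) else 0)"

definition is_normalized_eigvec :: "(int \<Rightarrow> real) \<Rightarrow> nat \<Rightarrow> real \<Rightarrow> (int \<Rightarrow> real) \<Rightarrow> bool" where
  "is_normalized_eigvec a l E \<phi> \<longleftrightarrow>
     (\<Sum>i\<in>{1..int l}. (\<phi> i)\<^sup>2) = 1 \<and>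
     (\<forall>n\<in>{1..int l}. hop_dirichlet a l \<phi> n = E * \<phi> n)"

end

theory Submission
  imports Defs
begin

text \<open>The peak value \<open>p = \<phi>(j\<^sub>0)\<close> is nonzero by normalization, so the eigenvalue equation at
  \<open>j\<^sub>0\<close> gives \<open>|E| \<le> 2M\<close>. For \<open>l \<ge> 4\<close> the sites \<open>j\<^sub>0 + d, j\<^sub>0 + 2d\<close> lie in \<open>{1..l}\<close> for
  \<open>d = 1\<close> or \<open>d = -1\<close>. Solving the eigenvalue equations at these two sites for the neighbour closer
  to the peak (its coefficient has modulus at least \<open>1/M\<close>) bounds \<open>p\<^sup>2\<close> by a constant times the
  mass at \<open>j\<^sub>0 + 2d, j\<^sub>0 + 3d\<close>, which lies off the window \<open>{j\<^sub>0 - 1, j\<^sub>0, j\<^sub>0 + 1}\<close>. The window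
  carries at least \<open>p\<^sup>2\<close> and at most \<open>3p\<^sup>2\<close> of the unit mass, which gives both bounds.\<close>

lemma hop_dirichlet_neighbour_bound:
  fixes a \<phi> :: "int \<Rightarrow> real"
  assumes M: "M > 0" and a: "\<forall>k. 1 / M \<le> \<bar>a k\<bar> \<and> \<bar>a k\<bar> \<le> M"
    and eig: "hop_dirichlet a l \<phi> n = E * \<phi> n"
    and m: "m \<in> {1..int l}" and adj: "\<bar>m - n\<bar> = 1"
  shows "\<bar>\<phi> m\<bar> \<le> M * (\<bar>E\<bar> * \<bar>\<phi> n\<bar> + M * (if 2*n - m \<in> {1..int l} then \<bar>\<phi> (2*n - m)\<bar> else 0))"
    (is "_ \<le> M * (_ + ?rest)")
proof -
  \<comment> \<open>\<open>b\<close> is the coefficient of \<open>\<phi> m\<close> in the equation at \<open>n\<close>, \<open>r\<close> the term of the other neighbour \<open>2n - m\<close>\<close>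
  define b where "b = (if m = n + 1 then a (n + 1) else a n)"
  define r where "r = hop_dirichlet a l \<phi> n - b * \<phi> m"
  have r: "\<bar>r\<bar> \<le> ?rest"
  proof -
    from adj consider "m = n + 1" | "m = n - 1" by linarith
    then show ?thesis
      by cases (use m a M in \<open>auto simp: r_def b_def hop_dirichlet_def abs_mult intro!: mult_right_mono\<close>)
  qed
  have "1 \<le> M * \<bar>b\<bar>"
    using a M unfolding b_def by (simp add: field_simps)
  then have "\<bar>\<phi> m\<bar> \<le> M * \<bar>b * \<phi> m\<bar>"
    using mult_right_mono[of 1 "M * \<bar>b\<bar>" "\<bar>\<phi> m\<bar>"] by (simp add: abs_mult mult.assoc)
  also have "b * \<phi> m = E * \<phi> n - r"
    using eig unfolding r_def by simp
  also have "M * \<bar>E * \<phi> n - r\<bar> \<le> M * (\<bar>E\<bar> * \<bar>\<phi> n\<bar> + ?rest)"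
    using r M by (intro mult_left_mono) (auto simp: abs_mult intro: order_trans[OF abs_triangle_ineq4])
  finally show ?thesis .
qed

lemma eigenvalue_abs_le_at_peak:
  fixes a \<phi> :: "int \<Rightarrow> real"
  assumes a: "\<forall>k. \<bar>a k\<bar> \<le> M"
    and eig: "hop_dirichlet a l \<phi> n = E * \<phi> n" and n: "n \<in> {1..int l}"
    and peak: "\<forall>j\<in>{1..int l}. \<bar>\<phi> j\<bar> \<le> \<bar>\<phi> n\<bar>" and nz: "\<phi> n \<noteq> 0"
  shows "\<bar>E\<bar> \<le> 2 * M"
proof -
  have "0 \<le> M"
    using a abs_ge_zero order_trans by blast
  have summand: "\<bar>if P then a k * \<phi> j else 0\<bar> \<le> M * \<bar>\<phi> n\<bar>" if "P \<Longrightarrow> j \<in> {1..int l}" for P k j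
    using that a peak \<open>0 \<le> M\<close> by (auto simp: abs_mult intro!: mult_mono)
  have "\<bar>E\<bar> * \<bar>\<phi> n\<bar> = \<bar>hop_dirichlet a l \<phi> n\<bar>"
    using eig by (simp add: abs_mult)
  also have "\<dots> \<le> M * \<bar>\<phi> n\<bar> + M * \<bar>\<phi> n\<bar>"
    unfolding hop_dirichlet_def by (rule order_trans[OF abs_triangle_ineq add_mono]; rule summand) (use n in auto)
  finally show ?thesis
    using nz by simp
qed

lemma two_step_bound:
  fixes M e p x y z :: real
  assumes "M > 0" "0 \<le> e" "e \<le> 2 * M" "0 \<le> x" "0 \<le> y" "0 \<le> z"
    and hp: "\<bar>p\<bar> \<le> M * (e * x + M * y)" and hx: "x \<le> M * (e * y + M * z)"
  shows "p\<^sup>2 \<le> 2 * (4 * M^4 + M^2)^2 * (y\<^sup>2 + z\<^sup>2)"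
proof -
  define c where "c = 4 * M^4 + M^2"
  have "\<bar>p\<bar> \<le> M * (2 * M * x + M * y)"
    using hp assms by (smt (verit) mult_left_mono mult_right_mono)
  also have "\<dots> \<le> M * (2 * M * (M * (2 * M * y + M * z)) + M * y)"
    using assms by (intro mult_left_mono add_mono order_trans[OF hx] mult_right_mono) auto
  also have "\<dots> = c * y + 2 * M^4 * z"
    by (simp add: c_def algebra_simps power_def)
  also have "\<dots> \<le> c * (y + z)"
    using assms by (simp add: c_def algebra_simps)
  finally have "\<bar>p\<bar>\<^sup>2 \<le> (c * (y + z))\<^sup>2"
    by (rule power_mono) simp
  also have "\<dots> = c^2 * (y + z)\<^sup>2"
    by (simp add: power_mult_distrib)
  also have "\<dots> \<le> c^2 * (2 * (y\<^sup>2 + z\<^sup>2))"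
    using zero_le_power2[of "y - z"] by (intro mult_left_mono) (simp_all add: power2_sum power2_diff)
  also have "\<dots> = 2 * c^2 * (y\<^sup>2 + z\<^sup>2)"
    by simp
  finally show ?thesis
    by (simp add: c_def)
qed

lemma normalized_eigvec_peak_nonzero:
  assumes ev: "is_normalized_eigvec a l E \<phi>"
    and peak: "\<forall>j\<in>{1..int l}. (\<phi> j)\<^sup>2 \<le> (\<phi> j0)\<^sup>2"
  shows "\<phi> j0 \<noteq> 0"
proof
  assume "\<phi> j0 = 0"
  then have "(\<Sum>i\<in>{1..int l}. (\<phi> i)\<^sup>2) = 0"
    using peak by (intro sum.neutral) (auto intro: antisym)
  then show False
    using ev by (simp add: is_normalized_eigvec_def)
qed

lemma eigvec_peak_sq_le_mass_two_away:
  fixes a \<phi> :: "int \<Rightarrow> real"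
  assumes M: "M > 0" and a: "\<forall>k. 1 / M \<le> \<bar>a k\<bar> \<and> \<bar>a k\<bar> \<le> M"
    and ev: "is_normalized_eigvec a l E \<phi>" and j0: "j0 \<in> {1..int l}"
    and peak: "\<forall>j\<in>{1..int l}. (\<phi> j)\<^sup>2 \<le> (\<phi> j0)\<^sup>2"
    and d: "d \<in> {1, -1}" and far: "j0 + 2 * d \<in> {1..int l}"
  shows "(\<phi> j0)\<^sup>2 \<le> 2 * (4 * M^4 + M^2)^2 * (\<Sum>i\<in>{j0 + 2 * d, j0 + 3 * d} \<inter> {1..int l}. (\<phi> i)\<^sup>2)"
proof -
  let ?I = "{1..int l}"
  have eig: "\<And>n. n \<in> ?I \<Longrightarrow> hop_dirichlet a l \<phi> n = E * \<phi> n"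
    using ev by (simp add: is_normalized_eigvec_def)
  have peak_abs: "\<forall>j\<in>?I. \<bar>\<phi> j\<bar> \<le> \<bar>\<phi> j0\<bar>"
    using peak by (simp add: abs_le_square_iff)
  have E: "\<bar>E\<bar> \<le> 2 * M"
    using eigenvalue_abs_le_at_peak[OF _ eig[OF j0] j0 peak_abs normalized_eigvec_peak_nonzero[OF ev peak]] a
    by blast
  define z where "z = (if j0 + 3 * d \<in> ?I then \<bar>\<phi> (j0 + 3 * d)\<bar> else 0)"
  have near: "j0 + d \<in> ?I"
    using d j0 far by auto
  have "\<bar>\<phi> j0\<bar> \<le> M * (\<bar>E\<bar> * \<bar>\<phi> (j0 + d)\<bar> + M * \<bar>\<phi> (j0 + 2 * d)\<bar>)"
    using hop_dirichlet_neighbour_bound[OF M a eig[OF near] j0] d far by (auto simp: algebra_simps)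
  moreover have "\<bar>\<phi> (j0 + d)\<bar> \<le> M * (\<bar>E\<bar> * \<bar>\<phi> (j0 + 2 * d)\<bar> + M * z)"
    using hop_dirichlet_neighbour_bound[OF M a eig[OF far] near] d unfolding z_def
    by (auto simp: algebra_simps)
  ultimately have "(\<phi> j0)\<^sup>2 \<le> 2 * (4 * M^4 + M^2)^2 * (\<bar>\<phi> (j0 + 2 * d)\<bar>\<^sup>2 + z\<^sup>2)"
    by (intro two_step_bound[OF M abs_ge_zero E abs_ge_zero abs_ge_zero]) (simp add: z_def)
  also have "\<bar>\<phi> (j0 + 2 * d)\<bar>\<^sup>2 + z\<^sup>2 = (\<Sum>i\<in>{j0 + 2 * d, j0 + 3 * d} \<inter> ?I. (\<phi> i)\<^sup>2)"
    using d far by (auto simp: z_def Int_insert_left)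
  finally show ?thesis .
qed

lemma eigvec_mass_off_peak_window:
  fixes a \<phi> :: "int \<Rightarrow> real"
  assumes M: "M > 0" and a: "\<forall>k. 1 / M \<le> \<bar>a k\<bar> \<and> \<bar>a k\<bar> \<le> M"
    and ev: "is_normalized_eigvec a l E \<phi>" and l: "l \<ge> 4" and j0: "j0 \<in> {1..int l}"
    and peak: "\<forall>j\<in>{1..int l}. (\<phi> j)\<^sup>2 \<le> (\<phi> j0)\<^sup>2"
  defines "S \<equiv> \<Sum>i\<in>{1..int l} - {j0 - 1, j0, j0 + 1}. (\<phi> i)\<^sup>2"
  shows "1 / (6 * (4 * M^4 + M^2)^2 + 1) \<le> S" and "S < 1"
proof -
  let ?I = "{1..int l}" and ?W = "{j0 - 1, j0, j0 + 1}"
  define c where "c = 2 * (4 * M^4 + M^2)^2"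
  have "1 = (\<Sum>i\<in>?I. (\<phi> i)\<^sup>2)"
    using ev by (simp add: is_normalized_eigvec_def)
  also have "\<dots> = (\<Sum>i\<in>?I \<inter> ?W. (\<phi> i)\<^sup>2) + S"
    unfolding S_def by (rule sum.Int_Diff) simp
  finally have split: "1 = (\<Sum>i\<in>?I \<inter> ?W. (\<phi> i)\<^sup>2) + S" .
  have window_lower: "(\<phi> j0)\<^sup>2 \<le> (\<Sum>i\<in>?I \<inter> ?W. (\<phi> i)\<^sup>2)"
    using sum_mono2[of "?I \<inter> ?W" "{j0}" "\<lambda>i. (\<phi> i)\<^sup>2"] j0 by auto
  have "(\<Sum>i\<in>?I \<inter> ?W. (\<phi> i)\<^sup>2) \<le> real (card (?I \<inter> ?W)) * (\<phi> j0)\<^sup>2"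
    using peak by (intro sum_bounded_above) auto
  also have "card (?I \<inter> ?W) \<le> 3"
    using card_mono[of ?W "?I \<inter> ?W"] by simp
  then have "real (card (?I \<inter> ?W)) * (\<phi> j0)\<^sup>2 \<le> 3 * (\<phi> j0)\<^sup>2"
    by (intro mult_right_mono) auto
  finally have window_upper: "(\<Sum>i\<in>?I \<inter> ?W. (\<phi> i)\<^sup>2) \<le> 3 * (\<phi> j0)\<^sup>2" .
  obtain d :: int where d: "d \<in> {1, -1}" "j0 + 2 * d \<in> ?I"
    using j0 l by (cases "j0 + 2 \<le> int l") (auto intro: that[of 1] that[of "-1"])
  have "{j0 + 2 * d, j0 + 3 * d} \<inter> ?I \<subseteq> ?I - ?W"
    using d by auto
  then have "(\<Sum>i\<in>{j0 + 2 * d, j0 + 3 * d} \<inter> ?I. (\<phi> i)\<^sup>2) \<le> S"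
    unfolding S_def by (intro sum_mono2) auto
  then have "(\<phi> j0)\<^sup>2 \<le> c * S"
    using eigvec_peak_sq_le_mass_two_away[OF M a ev j0 peak d] unfolding c_def
    by (meson order_trans mult_left_mono zero_le_mult_iff zero_le_numeral zero_le_power2)
  then have "1 \<le> (3 * c + 1) * S"
    using split window_upper by (simp add: algebra_simps)
  moreover have "3 * c + 1 > 0"
    unfolding c_def by (simp add: add_nonneg_pos)
  ultimately have "1 / (3 * c + 1) \<le> S"
    by (simp add: divide_le_eq mult.commute)
  then show "1 / (6 * (4 * M^4 + M^2)^2 + 1) \<le> S"
    by (simp add: c_def)
  have "(\<phi> j0)\<^sup>2 > 0"
    using normalized_eigvec_peak_nonzero[OF ev peak] by simp
  then show "S < 1"
    using split window_lower by linarith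
qed

theorem mainTheorem14:
  fixes M :: real
  assumes "M > 1"
  shows "\<exists>C>1. \<exists>L::nat. \<forall>l\<ge>L. \<forall>(a::int \<Rightarrow> real) E (\<phi>::int \<Rightarrow> real) j0.
           (\<forall>n. 1 / M \<le> \<bar>a n\<bar> \<and> \<bar>a n\<bar> \<le> M) \<longrightarrow>
           is_normalized_eigvec a l E \<phi> \<longrightarrow>
           j0 \<in> {1..int l} \<longrightarrow>
           (\<forall>j\<in>{1..int l}. (\<phi> j)\<^sup>2 \<le> (\<phi> j0)\<^sup>2) \<longrightarrow>
           (let u = (\<lambda>i. (\<phi> i)\<^sup>2);
                K = {1..int l} - {j0 - 1, j0, j0 + 1}
            in 1 / C < (\<Sum>i\<in>K. \<bar>u i\<bar>) \<and> (\<Sum>i\<in>K. \<bar>u i\<bar>) < 1)"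
proof -
  define B where "B = 6 * (4 * M^4 + M^2)^2 + 1"
  have "B > 0"
    unfolding B_def by (simp add: add_nonneg_pos)
  have window: "1 / (B + 1) < S \<and> S < 1"
    if "l \<ge> 4" "\<forall>n. 1 / M \<le> \<bar>a n\<bar> \<and> \<bar>a n\<bar> \<le> M" "is_normalized_eigvec a l E \<phi>"
      "j0 \<in> {1..int l}" "\<forall>j\<in>{1..int l}. (\<phi> j)\<^sup>2 \<le> (\<phi> j0)\<^sup>2"
      "S = (\<Sum>i\<in>{1..int l} - {j0 - 1, j0, j0 + 1}. (\<phi> i)\<^sup>2)"
    for l a E \<phi> j0 S
  proof -
    have "1 / (B + 1) < 1 / B"
      using \<open>B > 0\<close> by (simp add: frac_less2)
    moreover have "1 / B \<le> S" "S < 1"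
      using eigvec_mass_off_peak_window[of M a l E \<phi> j0] that assms unfolding B_def by auto
    ultimately show ?thesis
      by linarith
  qed
  show ?thesis
    unfolding Let_def abs_power2
    by (intro exI[of _ "B + 1"] conjI exI[of _ "4::nat"] allI impI window)
      (use \<open>B > 0\<close> in simp_all)
qed

end
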